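(* Let $H$ be a real Hilbert space, $A:H\to2^H$ maximal monotone with $\mathrm{zer}A\ne\emptyset$, $(\gamma_n)$ a sequence in $(0,\infty)$ with $\sum_n\gamma_n^2=\infty$ and rate of divergence $\theta$, $x_0\in H$, $x_{n+1}=J_{\gamma_nA}x_n$, $u_n=(x_n-x_{n+1})/\gamma_n$, and $b>0$ with $b\ge\|x_0-p\|$ for some $p\in\mathrm{zer}A$. Then: (i) for every $k,L\in\mathbb{N}$ there exists $N$ with $L\le N\le\Delta(k,L,b):=\lceil b^2(k+1)^2\rceil+L-1$ and $\|x_N-x_{N+1}\|\le\frac1{k+1}$; (ii) $u_n\to0$ with rate of convergence $\beta(k,\theta,b):=\theta(\lceil b^2(k+1)^2\rceil)$, i.e. $\|u_n\|\le\frac1{k+1}$ for all $k$ and all $n\ge\beta(k,\theta,b)$.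
   Context: $J_{\gamma A}:=(Id+\gamma A)^{-1}$ is the resolvent. A rate of divergence for $\sum\gamma_n^2$ is $\theta:\mathbb{N}\to\mathbb{N}$ with $\sum_{i=0}^{\theta(n)}\gamma_i^2\ge n$ for all $n$. *)

theory Defs
  imports "HOL-Analysis.Analysis"
begin

text \<open>Set-valued operators A : H \<rightarrow> 2^H are represented as functions 'a \<Rightarrow> 'a set
  (A x is the image set of x; the graph is {(x,u). u \<in> A x}).\<close>

definition monotone_op :: "('a::real_inner \<Rightarrow> 'a set) \<Rightarrow> bool" where
  "monotone_op A \<longleftrightarrow> (\<forall>x y u v. u \<in> A x \<longrightarrow> v \<in> A y \<longrightarrow> inner (x - y) (u - v) \<ge> 0)"

definition maximal_monotone :: "('a::real_inner \<Rightarrow> 'a set) \<Rightarrow> bool" where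
  "maximal_monotone A \<longleftrightarrow> monotone_op A \<and>
     (\<forall>B. monotone_op B \<longrightarrow> (\<forall>x. A x \<subseteq> B x) \<longrightarrow> B = A)"

definition zer :: "('a::real_vector \<Rightarrow> 'a set) \<Rightarrow> 'a set" where
  "zer A = {x. 0 \<in> A x}"

text \<open>Resolvent J_{\<gamma>A} = (Id + \<gamma>A)^{-1}, as a set-valued map:
  y \<in> J x  iff  x \<in> y + \<gamma> A y.\<close>
definition resolvent :: "real \<Rightarrow> ('a::real_vector \<Rightarrow> 'a set) \<Rightarrow> 'a \<Rightarrow> 'a set" where
  "resolvent \<gamma> A x = {y. \<exists>v \<in> A y. x = y + \<gamma> *\<^sub>R v}"

definition rate_of_divergence :: "(nat \<Rightarrow> real) \<Rightarrow> (nat \<Rightarrow> nat) \<Rightarrow> bool" where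
  "rate_of_divergence \<gamma> \<theta> \<longleftrightarrow> (\<forall>n. (\<Sum>i=0..\<theta> n. (\<gamma> i)\<^sup>2) \<ge> real n)"

end

theory Submission
  imports Defs
begin

text \<open>With u_n = (x_n - x_{n+1}) / \<gamma>_n \<in> A x_{n+1}, monotonicity against 0 \<in> A p gives the
  Fej\'er inequality |x_{n+1} - p|^2 + |x_n - x_{n+1}|^2 \<le> |x_n - p|^2, so the squared steps
  sum to at most b^2 and among any \<lceil>b^2 (k+1)^2\<rceil> consecutive steps one is at most 1/(k+1).
  Monotonicity against u_{n+1} \<in> A x_{n+2} makes |u_n| nonincreasing, hence for n \<ge> \<theta>(M)
  we get |u_n|^2 \<Sum>_{i \<le> \<theta>(M)} \<gamma>_i^2 \<le> \<Sum>_i \<gamma>_i^2 |u_i|^2 \<le> b^2, and the rate of divergence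
  bounds the left-hand factor below by M.\<close>

lemma monotone_opD:
  "monotone_op A \<Longrightarrow> u \<in> A x \<Longrightarrow> v \<in> A y \<Longrightarrow> inner (x - y) (u - v) \<ge> 0"
  unfolding monotone_op_def by blast

lemma resolvent_residual_mem:
  assumes "y \<in> resolvent \<gamma> A x" and "\<gamma> > 0"
  shows "inverse \<gamma> *\<^sub>R (x - y) \<in> A y"
proof -
  obtain v where "v \<in> A y" "x = y + \<gamma> *\<^sub>R v"
    using assms(1) unfolding resolvent_def by blast
  then show ?thesis using assms(2) by simp
qed

lemma resolvent_fejer:
  fixes A :: "'a::real_inner \<Rightarrow> 'a set"
  assumes "monotone_op A" and "p \<in> zer A"
    and "y \<in> resolvent \<gamma> A x" and "\<gamma> > 0"
  shows "(norm (y - p))\<^sup>2 + (norm (x - y))\<^sup>2 \<le> (norm (x - p))\<^sup>2"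
proof -
  have "inner (y - p) (inverse \<gamma> *\<^sub>R (x - y) - 0) \<ge> 0"
    using monotone_opD[OF assms(1) resolvent_residual_mem[OF assms(3,4)]] assms(2)
    unfolding zer_def by blast
  then have "inner (y - p) (x - y) \<ge> 0"
    using assms(4) by (simp add: zero_le_mult_iff)
  moreover have "x - p = (y - p) + (x - y)" by simp
  then have "(norm (x - p))\<^sup>2 = (norm (y - p))\<^sup>2 + (norm (x - y))\<^sup>2 + 2 * inner (y - p) (x - y)"
    by (simp only: power2_norm_eq_inner inner_add_left inner_add_right inner_commute)
  ultimately show ?thesis by simp
qed

lemma resolvent_residual_norm_le:
  fixes A :: "'a::real_inner \<Rightarrow> 'a set"
  assumes "monotone_op A"
    and "y \<in> resolvent \<gamma> A x" "\<gamma> > 0"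
    and "z \<in> resolvent \<delta> A y" "\<delta> > 0"
  shows "norm (inverse \<delta> *\<^sub>R (y - z)) \<le> norm (inverse \<gamma> *\<^sub>R (x - y))"
proof -
  define u where "u = inverse \<gamma> *\<^sub>R (x - y)"
  define v where "v = inverse \<delta> *\<^sub>R (y - z)"
  have "y - z = \<delta> *\<^sub>R v" using assms(5) by (simp add: v_def)
  moreover have "inner (y - z) (u - v) \<ge> 0"
    using monotone_opD[OF assms(1)] resolvent_residual_mem[OF assms(2,3)]
      resolvent_residual_mem[OF assms(4,5)] unfolding u_def v_def by blast
  ultimately have "inner v (u - v) \<ge> 0"
    using assms(5) by (simp add: zero_le_mult_iff)
  then have "norm v * norm v \<le> norm v * norm u"
    using norm_cauchy_schwarz[of v u]
    by (simp add: inner_diff_right power2_norm_eq_inner[symmetric] power2_eq_square)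
  then show ?thesis
    unfolding u_def[symmetric] v_def[symmetric]
    by (metis mult_le_cancel_left norm_ge_zero order.strict_iff_order)
qed

lemma proximal_steps_sum_le:
  fixes A :: "'a::real_inner \<Rightarrow> 'a set"
  assumes "monotone_op A" and "p \<in> zer A"
    and "\<And>n. x (Suc n) \<in> resolvent (\<gamma> n) A (x n)" and "\<And>n. \<gamma> n > 0"
  shows "(\<Sum>i<n. (norm (x i - x (Suc i)))\<^sup>2) \<le> (norm (x 0 - p))\<^sup>2"
proof -
  have "(\<Sum>i<n. (norm (x i - x (Suc i)))\<^sup>2) + (norm (x n - p))\<^sup>2 \<le> (norm (x 0 - p))\<^sup>2"
  proof (induction n)
    case (Suc n)
    then show ?case using resolvent_fejer[OF assms(1,2,3,4), of n] by simp
  qed simp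
  then show ?thesis by (smt (verit) zero_le_power2)
qed

lemma small_term_in_window:
  fixes f :: "nat \<Rightarrow> real"
  assumes "\<And>i. f i \<ge> 0" and "\<And>n. (\<Sum>i<n. f i) \<le> B"
    and "B \<le> real M * e" and "M \<ge> 1"
  shows "\<exists>N. L \<le> N \<and> N < L + M \<and> f N \<le> e"
proof (rule ccontr)
  assume "\<not> ?thesis"
  then have "(\<Sum>N\<in>{L..<L+M}. e) < (\<Sum>N\<in>{L..<L+M}. f N)"
    using \<open>M \<ge> 1\<close> by (intro sum_strict_mono) (auto simp: not_le)
  also have "\<dots> \<le> (\<Sum>N<L+M. f N)"
    using assms(1) by (intro sum_mono2) auto
  also have "\<dots> \<le> B" by (rule assms(2))
  finally show False using assms(3) by simp
qed

lemma antitone_weighted_sum_rate: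
  fixes \<gamma> c :: "nat \<Rightarrow> real"
  assumes "rate_of_divergence \<gamma> \<theta>" and "decseq c" and "\<And>i. c i \<ge> 0"
    and "\<And>n. (\<Sum>i<n. (\<gamma> i)\<^sup>2 * (c i)\<^sup>2) \<le> B"
    and "B \<le> real M * e\<^sup>2" and "B > 0" and "e \<ge> 0"
    and "n \<ge> \<theta> M"
  shows "c n \<le> e"
proof -
  have "real M * (c n)\<^sup>2 \<le> (\<Sum>i=0..\<theta> M. (\<gamma> i)\<^sup>2) * (c n)\<^sup>2"
    using assms(1) unfolding rate_of_divergence_def by (simp add: mult_right_mono)
  also have "\<dots> = (\<Sum>i=0..\<theta> M. (\<gamma> i)\<^sup>2 * (c n)\<^sup>2)" by (simp add: sum_distrib_right)
  also have "\<dots> \<le> (\<Sum>i=0..\<theta> M. (\<gamma> i)\<^sup>2 * (c i)\<^sup>2)"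
    using assms(2,3,8) by (intro sum_mono mult_left_mono power_mono) (auto simp: decseq_def)
  also have "\<dots> = (\<Sum>i<Suc (\<theta> M). (\<gamma> i)\<^sup>2 * (c i)\<^sup>2)"
    by (simp add: atLeast0AtMost lessThan_Suc_atMost)
  also have "\<dots> \<le> real M * e\<^sup>2" using assms(4,5) by (rule order_trans)
  finally have "real M * (c n)\<^sup>2 \<le> real M * e\<^sup>2" .
  moreover have "M > 0" using assms(5,6) by (cases M) auto
  ultimately have "(c n)\<^sup>2 \<le> e\<^sup>2" by simp
  then show ?thesis using \<open>e \<ge> 0\<close> by (rule power2_le_imp_le)
qed

theorem lemma8p3:
  fixes A :: "'a::{real_inner, complete_space} \<Rightarrow> 'a set"
    and \<gamma> :: "nat \<Rightarrow> real" and \<theta> :: "nat \<Rightarrow> nat"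
    and x u :: "nat \<Rightarrow> 'a" and b :: real and p :: 'a
  assumes mm: "maximal_monotone A"
    and "zer A \<noteq> {}"
    and gpos: "\<And>n. \<gamma> n > 0"
    and "\<not> summable (\<lambda>n. (\<gamma> n)\<^sup>2)"
    and rate: "rate_of_divergence \<gamma> \<theta>"
    and res: "\<And>n. x (Suc n) \<in> resolvent (\<gamma> n) A (x n)"
    and udef: "\<And>n. u n = inverse (\<gamma> n) *\<^sub>R (x n - x (Suc n))"
    and bpos: "b > 0"
    and pz: "p \<in> zer A"
    and bnd: "b \<ge> norm (x 0 - p)"
  shows "(\<forall>k L :: nat. \<exists>N. L \<le> N \<and> N \<le> nat \<lceil>b\<^sup>2 * (real k + 1)\<^sup>2\<rceil> + L - 1 \<and>
            norm (x N - x (Suc N)) \<le> 1 / (real k + 1))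
       \<and> (\<forall>k n :: nat. n \<ge> \<theta> (nat \<lceil>b\<^sup>2 * (real k + 1)\<^sup>2\<rceil>) \<longrightarrow> norm (u n) \<le> 1 / (real k + 1))"
proof -
  have mon: "monotone_op A" using mm unfolding maximal_monotone_def by blast
  have "(norm (x 0 - p))\<^sup>2 \<le> b\<^sup>2" using bnd by (simp add: power_mono)
  then have steps: "(\<Sum>i<n. (norm (x i - x (Suc i)))\<^sup>2) \<le> b\<^sup>2" for n
    using proximal_steps_sum_le[OF mon pz, of x \<gamma> n] res gpos by fastforce
  have step_u: "(norm (x i - x (Suc i)))\<^sup>2 = (\<gamma> i)\<^sup>2 * (norm (u i))\<^sup>2" for i
    using gpos[of i] by (simp add: udef power_mult_distrib power_inverse)
  have u_decseq: "decseq (\<lambda>n. norm (u n))"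
    using resolvent_residual_norm_le[OF mon res gpos res gpos] by (intro decseq_SucI) (simp add: udef)
  have window: "b\<^sup>2 \<le> real (nat \<lceil>b\<^sup>2 * (real k + 1)\<^sup>2\<rceil>) * (1 / (real k + 1))\<^sup>2" for k
    by (simp add: power_divide field_simps)
  have window_ne: "nat \<lceil>b\<^sup>2 * (real k + 1)\<^sup>2\<rceil> \<ge> 1" for k
    using bpos by (simp add: Suc_le_eq)
  show ?thesis
  proof (intro conjI allI impI)
    fix k L :: nat
    obtain N where N: "L \<le> N" "N < L + nat \<lceil>b\<^sup>2 * (real k + 1)\<^sup>2\<rceil>"
      "(norm (x N - x (Suc N)))\<^sup>2 \<le> (1 / (real k + 1))\<^sup>2"
      using small_term_in_window[OF zero_le_power2 steps window window_ne, of L k] by blast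
    have "norm (x N - x (Suc N)) \<le> 1 / (real k + 1)"
      using N(3) by (rule power2_le_imp_le) simp
    with N(1,2) show "\<exists>N. L \<le> N \<and> N \<le> nat \<lceil>b\<^sup>2 * (real k + 1)\<^sup>2\<rceil> + L - 1 \<and>
            norm (x N - x (Suc N)) \<le> 1 / (real k + 1)"
      by (intro exI[of _ N]) simp
  next
    fix k n :: nat
    assume "\<theta> (nat \<lceil>b\<^sup>2 * (real k + 1)\<^sup>2\<rceil>) \<le> n"
    moreover have "b\<^sup>2 > 0" using bpos by simp
    ultimately show "norm (u n) \<le> 1 / (real k + 1)"
      using antitone_weighted_sum_rate[OF rate u_decseq norm_ge_zero steps[unfolded step_u] window]
      by simp
  qed
qed

end
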